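(* Let $T, N, s, \delta$ be positive integers and $\beta$ a nonnegative integer. Let $x_1,\dots,x_T$ be nonnegative integers, where $x_t$ is the number of shifts starting at time step $t$, every shift started at time $t$ occupying the time steps $t, t+1, \dots, t+\delta-1$. Set $x_\tau := 0$ for $\tau \le 0$ and, for $t\in\{1,\dots,T\}$, define $$z_t := \sum_{\tau=t-\delta-\beta+1}^{t} x_\tau .$$ Suppose that $$\sum_{t=1}^T x_t = sN \qquad\text{and}\qquad z_t \le N \ \text{ for all } t\in\{1,\dots,T\}.$$ Then the $sN$ shifts can be assigned to $N$ drivers such that each driver works exactly $s$ shifts (each of $\delta$ time steps), and each driver has a break of at least $\beta$ time steps between any two consecutive shifts assigned to that driver; i.e., if a driver is assigned shifts starting at times $t_1 < t_2$, then $t_2 \ge t_1 + \delta + \beta$.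
   Context: Time is discretized into steps $1,\dots,T$. A shift starting at time $t$ is active during time steps $t,\dots,t+\delta-1$. The "extended shift" of a shift starting at $t_1$ is the interval $[t_1, t_1+\delta+\beta)$, i.e. the shift together with the mandatory break of $\beta$ time steps after it; a driver has adequate breaks exactly when the extended shifts assigned to that driver are pairwise disjoint. *)

theory Defs
  imports Main
begin

text \<open>Number of shifts whose extended shift (shift plus break) covers time t:
  z_t = sum of x_tau for tau from t-delta-beta+1 to t, with x_tau = 0 for tau <= 0.\<close>
definition zval :: "(nat \<Rightarrow> nat) \<Rightarrow> nat \<Rightarrow> nat \<Rightarrow> nat \<Rightarrow> nat" where
  "zval x \<delta> \<beta> t = (\<Sum>\<tau> \<in> {\<tau>. 1 \<le> \<tau> \<and> \<tau> \<le> t \<and> t < \<tau> + \<delta> + \<beta>}. x \<tau>)"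

text \<open>The set of individual shifts: shift (t,k) is the k-th shift starting at time t.\<close>
definition shifts :: "nat \<Rightarrow> (nat \<Rightarrow> nat) \<Rightarrow> (nat \<times> nat) set" where
  "shifts T x = {(t, k). 1 \<le> t \<and> t \<le> T \<and> k < x t}"

end

theory Submission
  imports Defs
begin

text \<open>Number the shifts chronologically \<open>0, \<dots>, sN - 1\<close> (shifts with the same start in any
  order) and give shift number \<open>j\<close> to driver \<open>j mod N\<close>; every driver then gets exactly \<open>s\<close>
  shifts. If two shifts start at \<open>t\<^sub>1 \<le> t\<^sub>2 < t\<^sub>1 + \<delta> + \<beta>\<close>, both are among the shifts started
  in \<open>[t\<^sub>1, t\<^sub>2]\<close>, whose numbers form an interval of length at most \<open>z\<^bsub>t\<^sub>2\<^esub> \<le> N\<close>. So their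
  numbers differ by less than \<open>N\<close>, and the two shifts go to different drivers.\<close>

definition shifts_before :: "(nat \<Rightarrow> nat) \<Rightarrow> nat \<Rightarrow> nat" where
  "shifts_before x t = (\<Sum>\<tau> = 1..<t. x \<tau>)"

definition shift_index :: "(nat \<Rightarrow> nat) \<Rightarrow> nat \<times> nat \<Rightarrow> nat" where
  "shift_index x = (\<lambda>(t, k). shifts_before x t + k)"

lemma shifts_before_mono: "a \<le> b \<Longrightarrow> shifts_before x a \<le> shifts_before x b"
  unfolding shifts_before_def by (rule sum_mono2) auto

lemma shifts_before_Suc_eq_add_sum:
  assumes "1 \<le> a" "a \<le> Suc b"
  shows "shifts_before x (Suc b) = shifts_before x a + (\<Sum>\<tau> = a..b. x \<tau>)"
  using sum.atLeastLessThan_concat[of 1 a "Suc b" x] assms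
  unfolding shifts_before_def by (simp add: atLeastLessThanSuc_atLeastAtMost)

lemma shift_index_in_interval:
  assumes "(t, k) \<in> shifts T x" "1 \<le> a" "a \<le> t" "t \<le> b"
  shows "shift_index x (t, k) \<in> {shifts_before x a..<shifts_before x (Suc b)}"
proof -
  have "shifts_before x (Suc t) = shifts_before x t + x t"
    using shifts_before_Suc_eq_add_sum[of t t x] assms by (simp add: shifts_def)
  moreover have "k < x t"
    using assms(1) by (simp add: shifts_def)
  ultimately show ?thesis
    using shifts_before_mono[of a t x] shifts_before_mono[of "Suc t" "Suc b" x] assms(3,4)
    by (auto simp: shift_index_def)
qed

lemma shift_index_less:
  assumes "(t\<^sub>1, k\<^sub>1) \<in> shifts T x" "(t\<^sub>2, k\<^sub>2) \<in> shifts T x" "t\<^sub>1 < t\<^sub>2"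
  shows "shift_index x (t\<^sub>1, k\<^sub>1) < shift_index x (t\<^sub>2, k\<^sub>2)"
proof -
  have "1 \<le> t\<^sub>1" "1 \<le> t\<^sub>2"
    using assms(1,2) by (auto simp: shifts_def)
  then have "shift_index x (t\<^sub>1, k\<^sub>1) < shifts_before x (Suc t\<^sub>1)"
    and "shifts_before x t\<^sub>2 \<le> shift_index x (t\<^sub>2, k\<^sub>2)"
    using shift_index_in_interval[OF assms(1), of t\<^sub>1 t\<^sub>1]
      shift_index_in_interval[OF assms(2), of t\<^sub>2 t\<^sub>2] by auto
  moreover have "shifts_before x (Suc t\<^sub>1) \<le> shifts_before x t\<^sub>2"
    using assms(3) by (simp add: shifts_before_mono)
  ultimately show ?thesis
    by linarith
qed

lemma inj_on_shift_index: "inj_on (shift_index x) (shifts T x)"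
proof (rule inj_onI)
  fix p q
  assume p: "p \<in> shifts T x" and q: "q \<in> shifts T x"
    and eq: "shift_index x p = shift_index x q"
  obtain t\<^sub>1 k\<^sub>1 t\<^sub>2 k\<^sub>2 where pq: "p = (t\<^sub>1, k\<^sub>1)" "q = (t\<^sub>2, k\<^sub>2)"
    by fastforce
  have "t\<^sub>1 = t\<^sub>2"
    using shift_index_less[of t\<^sub>1 k\<^sub>1 T x t\<^sub>2 k\<^sub>2] shift_index_less[of t\<^sub>2 k\<^sub>2 T x t\<^sub>1 k\<^sub>1] p q eq pq
    by (metis less_irrefl nat_neq_iff)
  then show "p = q"
    using eq pq by (simp add: shift_index_def)
qed

lemma card_shifts: "card (shifts T x) = (\<Sum>t = 1..T. x t)"
proof -
  have "shifts T x = Sigma {1..T} (\<lambda>t. {..<x t})"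
    by (auto simp: shifts_def)
  then show ?thesis
    by (simp add: card_SigmaI)
qed

lemma shift_index_image: "shift_index x ` shifts T x = {..<(\<Sum>t = 1..T. x t)}"
proof (rule card_subset_eq)
  have "shift_index x p < shifts_before x (Suc T)" if "p \<in> shifts T x" for p
    using that shift_index_in_interval[of "fst p" "snd p" T x 1 T]
    by (auto simp: shifts_def)
  moreover have "shifts_before x (Suc T) = (\<Sum>t = 1..T. x t)"
    by (simp add: shifts_before_def atLeastLessThanSuc_atLeastAtMost)
  ultimately show "shift_index x ` shifts T x \<subseteq> {..<(\<Sum>t = 1..T. x t)}"
    by auto
  show "card (shift_index x ` shifts T x) = card {..<(\<Sum>t = 1..T. x t)}"
    by (simp add: card_image inj_on_shift_index card_shifts)
qed simp

lemma card_residue_class: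
  fixes N :: nat
  assumes "i < N"
  shows "card {j. j < s * N \<and> j mod N = i} = s"
proof -
  have "{j. j < s * N \<and> j mod N = i} = (\<lambda>m. i + N * m) ` {..<s}"
  proof (intro set_eqI iffI)
    fix j
    assume "j \<in> {j. j < s * N \<and> j mod N = i}"
    then have "j = i + N * (j div N)" "j div N < s"
      using assms by (auto simp: div_less_iff_less_mult mult.commute)
    then show "j \<in> (\<lambda>m. i + N * m) ` {..<s}"
      by blast
  next
    fix j
    assume "j \<in> (\<lambda>m. i + N * m) ` {..<s}"
    then obtain m where "m < s" "j = i + N * m"
      by blast
    moreover have "N + N * m \<le> s * N"
      using \<open>m < s\<close> by (metis Suc_leI mult.commute mult_Suc_right mult_le_mono2)
    ultimately show "j \<in> {j. j < s * N \<and> j mod N = i}"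
      using assms by simp
  qed
  moreover have "inj_on (\<lambda>m. i + N * m) {..<s}"
    using assms by (intro inj_onI) simp
  ultimately show ?thesis
    by (simp add: card_image)
qed

lemma eq_if_mod_eq_in_interval:
  fixes a b c N :: nat
  assumes "a \<in> {c..<c + N}" "b \<in> {c..<c + N}" "a mod N = b mod N"
  shows "a = b"
proof -
  have "a = b"
    if ab: "a \<in> {c..<c + N}" "b \<in> {c..<c + N}" "a mod N = b mod N" "a \<le> b" for a b
  proof -
    obtain m where "b = a + N * m"
      using mod_eq_nat2E[OF ab(3,4)] by blast
    moreover have "c \<le> a" "b < c + N"
      using ab(1,2) by auto
    ultimately have "N * m < N"
      by linarith
    with \<open>b = a + N * m\<close> show "a = b"
      by simp
  qed
  from this[OF assms] this[OF assms(2,1) assms(3)[symmetric]] show ?thesis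
    by linarith
qed

lemma sum_window_le_zval:
  assumes "1 \<le> t\<^sub>1" "t\<^sub>2 < t\<^sub>1 + \<delta> + \<beta>"
  shows "(\<Sum>\<tau> = t\<^sub>1..t\<^sub>2. x \<tau>) \<le> zval x \<delta> \<beta> t\<^sub>2"
  unfolding zval_def by (rule sum_mono2) (use assms in auto)

lemma shifts_with_same_residue_far_apart:
  assumes z: "\<forall>t \<in> {1..T}. zval x \<delta> \<beta> t \<le> N"
    and p: "p \<in> shifts T x" and q: "q \<in> shifts T x" and "p \<noteq> q"
    and residue: "shift_index x p mod N = shift_index x q mod N"
    and "fst p \<le> fst q"
  shows "fst p + \<delta> + \<beta> \<le> fst q"
proof (rule ccontr)
  assume "\<not> fst p + \<delta> + \<beta> \<le> fst q"
  obtain t\<^sub>1 k\<^sub>1 t\<^sub>2 k\<^sub>2 where pq: "p = (t\<^sub>1, k\<^sub>1)" "q = (t\<^sub>2, k\<^sub>2)"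
    by fastforce
  with assms \<open>\<not> fst p + \<delta> + \<beta> \<le> fst q\<close>
  have t: "1 \<le> t\<^sub>1" "t\<^sub>1 \<le> t\<^sub>2" "t\<^sub>2 \<le> T" "t\<^sub>2 < t\<^sub>1 + \<delta> + \<beta>"
    by (auto simp: shifts_def)
  let ?window = "{shifts_before x t\<^sub>1..<shifts_before x (Suc t\<^sub>2)}"
  have "shift_index x p \<in> ?window" "shift_index x q \<in> ?window"
    using shift_index_in_interval[of t\<^sub>1 k\<^sub>1 T x t\<^sub>1 t\<^sub>2]
      shift_index_in_interval[of t\<^sub>2 k\<^sub>2 T x t\<^sub>1 t\<^sub>2] p q pq t(1,2) by auto
  moreover have "shifts_before x (Suc t\<^sub>2) \<le> shifts_before x t\<^sub>1 + N"
    using shifts_before_Suc_eq_add_sum[of t\<^sub>1 t\<^sub>2 x] sum_window_le_zval[of t\<^sub>1 t\<^sub>2 \<delta> \<beta> x]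
      z[rule_format, of t\<^sub>2] t
    by auto
  ultimately have "shift_index x p \<in> {shifts_before x t\<^sub>1..<shifts_before x t\<^sub>1 + N}"
    and "shift_index x q \<in> {shifts_before x t\<^sub>1..<shifts_before x t\<^sub>1 + N}"
    by auto
  then have "shift_index x p = shift_index x q"
    using eq_if_mod_eq_in_interval residue by blast
  with inj_on_shift_index p q \<open>p \<noteq> q\<close> show False
    by (metis inj_on_def)
qed

theorem lemma1:
  fixes T N s \<delta> \<beta> :: nat and x :: "nat \<Rightarrow> nat"
  assumes "T > 0" "N > 0" "s > 0" "\<delta> > 0"
    and "(\<Sum>t = 1..T. x t) = s * N"
    and "\<forall>t \<in> {1..T}. zval x \<delta> \<beta> t \<le> N"
  shows "\<exists>d :: nat \<times> nat \<Rightarrow> nat.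
           (\<forall>p \<in> shifts T x. d p < N) \<and>
           (\<forall>i < N. card {p \<in> shifts T x. d p = i} = s) \<and>
           (\<forall>p \<in> shifts T x. \<forall>q \<in> shifts T x.
              p \<noteq> q \<and> d p = d q \<and> fst p \<le> fst q \<longrightarrow> fst p + \<delta> + \<beta> \<le> fst q)"
proof (intro exI[of _ "\<lambda>p. shift_index x p mod N"] conjI ballI allI impI)
  fix i
  assume "i < N"
  let ?S = "shifts T x"
  have "card {p \<in> ?S. shift_index x p mod N = i}
      = card (shift_index x ` {p \<in> ?S. shift_index x p mod N = i})"
    by (rule card_image[symmetric]) (auto intro: inj_on_subset[OF inj_on_shift_index])
  also have "shift_index x ` {p \<in> ?S. shift_index x p mod N = i} = {j. j < s * N \<and> j mod N = i}"
    using shift_index_image[of x T] assms(5) by auto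
  finally show "card {p \<in> ?S. shift_index x p mod N = i} = s"
    using card_residue_class[OF \<open>i < N\<close>] by simp
qed (use assms(2,6) shifts_with_same_residue_far_apart in auto)

end
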